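(* Let $T$ be a complete theory and $\mathcal{M}$ a sufficiently saturated model of $T$. (1) The set $\mathcal{SL}_{\rm acl}(T)$ of all regular operators of the form ${\rm acl}^\Delta$ ($\Delta$ a set of formulae), ordered by pointwise inclusion, is a lower semilattice (any two elements have a greatest lower bound, given by intersection) with a least and a greatest element. (2) For $n\in\omega\setminus\{0\}$, the set $\mathcal{SL}_{{\rm acl}_n}(T)$ of all regular operators of the form ${\rm acl}^\Delta_n$, ordered by pointwise inclusion, is a lower semilattice with a least element; it has a greatest element if the operator ${\rm acl}_n$ is regular.
   Context: For a set $\Delta$ of formulae $\varphi(x,\overline{y})$ and $A\subseteq M$, ${\rm acl}^\Delta(A)$ is the union of the solution sets $\varphi(\mathcal{M},\overline{a})$ over $\varphi\in\Delta$ and tuples $\overline{a}$ from $A$ such that $\varphi(x,\overline{a})$ has finitely many solutions; ${\rm acl}^\Delta_n(A)$ is the analogous union over those with at most $n$ solutions. ${\rm acl}_n$ is ${\rm acl}^\Delta_n$ with $\Delta$ the set of all formulae, and ${\rm acl}$ is ${\rm acl}^\Delta$ with $\Delta$ all formulae. An operator ${\rm cl}$ on subsets of $M$ is regular if $A\subseteq{\rm cl}(A)$ and ${\rm cl}({\rm cl}(A))\subseteq{\rm cl}(A)$ for all $A\subseteq M$. Pointwise inclusion: ${\rm cl}_1\leq{\rm cl}_2$ iff ${\rm cl}_1(A)\subseteq{\rm cl}_2(A)$ for all $A$. *)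

theory Defs
  imports Main
begin

datatype 'f trm = Var nat | Fn 'f "'f trm list"

datatype ('f,'p) fm =
    FEq "'f trm" "'f trm"
  | FRel 'p "'f trm list"
  | FNeg "('f,'p) fm"
  | FConj "('f,'p) fm" "('f,'p) fm"
  | FEx nat "('f,'p) fm"

record ('a,'f,'p) struc =
  univ :: "'a set"
  fun_int :: "'f \<Rightarrow> 'a list \<Rightarrow> 'a"
  rel_int :: "'p \<Rightarrow> 'a list \<Rightarrow> bool"

definition is_struc :: "('a,'f,'p) struc \<Rightarrow> bool" where
  "is_struc M \<longleftrightarrow> univ M \<noteq> {} \<and>
     (\<forall>f as. set as \<subseteq> univ M \<longrightarrow> fun_int M f as \<in> univ M)"

fun tvars :: "'f trm \<Rightarrow> nat set" where
  "tvars (Var n) = {n}"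
| "tvars (Fn f ts) = (\<Union>t\<in>set ts. tvars t)"

fun fvars :: "('f,'p) fm \<Rightarrow> nat set" where
  "fvars (FEq s t) = tvars s \<union> tvars t"
| "fvars (FRel p ts) = (\<Union>t\<in>set ts. tvars t)"
| "fvars (FNeg \<phi>) = fvars \<phi>"
| "fvars (FConj \<phi> \<psi>) = fvars \<phi> \<union> fvars \<psi>"
| "fvars (FEx v \<phi>) = fvars \<phi> - {v}"

fun teval :: "('a,'f,'p) struc \<Rightarrow> (nat \<Rightarrow> 'a) \<Rightarrow> 'f trm \<Rightarrow> 'a" where
  "teval M e (Var n) = e n"
| "teval M e (Fn f ts) = fun_int M f (map (teval M e) ts)"

fun sat :: "('a,'f,'p) struc \<Rightarrow> (nat \<Rightarrow> 'a) \<Rightarrow> ('f,'p) fm \<Rightarrow> bool" where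
  "sat M e (FEq s t) = (teval M e s = teval M e t)"
| "sat M e (FRel p ts) = rel_int M p (map (teval M e) ts)"
| "sat M e (FNeg \<phi>) = (\<not> sat M e \<phi>)"
| "sat M e (FConj \<phi> \<psi>) = (sat M e \<phi> \<and> sat M e \<psi>)"
| "sat M e (FEx v \<phi>) = (\<exists>b\<in>univ M. sat M (e(v := b)) \<phi>)"

definition sentence :: "('f,'p) fm \<Rightarrow> bool" where
  "sentence \<phi> \<longleftrightarrow> fvars \<phi> = {}"

definition true_in :: "('a,'f,'p) struc \<Rightarrow> ('f,'p) fm \<Rightarrow> bool" where
  "true_in M \<phi> \<longleftrightarrow> (\<forall>e. (\<forall>i. e i \<in> univ M) \<longrightarrow> sat M e \<phi>)"

definition is_model :: "('a,'f,'p) struc \<Rightarrow> ('f,'p) fm set \<Rightarrow> bool" where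
  "is_model M T \<longleftrightarrow> is_struc M \<and> (\<forall>\<phi>\<in>T. sentence \<phi> \<and> true_in M \<phi>)"

definition complete_theory :: "('f,'p) fm set \<Rightarrow> 'a itself \<Rightarrow> bool" where
  "complete_theory T _ \<longleftrightarrow> (\<forall>\<phi>\<in>T. sentence \<phi>) \<and>
     (\<exists>N :: ('a,'f,'p) struc. is_model N T) \<and>
     (\<forall>\<phi>. sentence \<phi> \<longrightarrow>
        (\<forall>N :: ('a,'f,'p) struc. is_model N T \<longrightarrow> true_in N \<phi>) \<or>
        (\<forall>N :: ('a,'f,'p) struc. is_model N T \<longrightarrow> true_in N (FNeg \<phi>)))"

section \<open>Formulas \<phi>(x, y1..yn): x is variable 0, y_i is variable i\<close>

definition env :: "'a \<Rightarrow> 'a list \<Rightarrow> nat \<Rightarrow> 'a" where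
  "env b as i = (if i = 0 then b else if i - 1 < length as then as ! (i - 1) else b)"

text \<open>A formula \<phi>(x,\<bar>y) is a pair (n, \<phi>) with free variables among x, y1..yn.\<close>
definition wf_xfm :: "nat \<times> ('f,'p) fm \<Rightarrow> bool" where
  "wf_xfm p \<longleftrightarrow> fvars (snd p) \<subseteq> {0..fst p}"

definition sols :: "('a,'f,'p) struc \<Rightarrow> ('f,'p) fm \<Rightarrow> 'a list \<Rightarrow> 'a set" where
  "sols M \<phi> as = {b \<in> univ M. sat M (env b as) \<phi>}"

text \<open>Saturation: every finitely satisfiable 1-type over a parameter set A with
  |A| < kappa is realized. Here kappa = |T|^+ with |T| = |L| + aleph0, i.e.
  A injects into the type of symbols plus nat.\<close>
definition kappa_small_params :: "'a set \<Rightarrow> 'f itself \<Rightarrow> 'p itself \<Rightarrow> bool" where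
  "kappa_small_params A _ _ \<longleftrightarrow>
     (\<exists>g :: 'a \<Rightarrow> ('f + 'p + nat). inj_on g A)"

definition saturated_model :: "('a,'f,'p) struc \<Rightarrow> ('f,'p) fm set \<Rightarrow> bool" where
  "saturated_model M T \<longleftrightarrow>
    (\<forall>A p. A \<subseteq> univ M \<longrightarrow> kappa_small_params A TYPE('f) TYPE('p) \<longrightarrow>
       (\<forall>(\<phi>, as) \<in> p. set as \<subseteq> A \<and> fvars \<phi> \<subseteq> {0..length as}) \<longrightarrow>
       (\<forall>q. finite q \<longrightarrow> q \<subseteq> p \<longrightarrow>
           (\<exists>b\<in>univ M. \<forall>(\<phi>, as) \<in> q. sat M (env b as) \<phi>)) \<longrightarrow>
       (\<exists>b\<in>univ M. \<forall>(\<phi>, as) \<in> p. sat M (env b as) \<phi>))"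

definition aclD :: "('a,'f,'p) struc \<Rightarrow> (nat \<times> ('f,'p) fm) set \<Rightarrow> 'a set \<Rightarrow> 'a set" where
  "aclD M \<Delta> A = \<Union> {sols M \<phi> as | n \<phi> as. (n, \<phi>) \<in> \<Delta> \<and> set as \<subseteq> A \<and>
                        length as = n \<and> finite (sols M \<phi> as)}"

definition aclDn :: "('a,'f,'p) struc \<Rightarrow> (nat \<times> ('f,'p) fm) set \<Rightarrow> nat \<Rightarrow> 'a set \<Rightarrow> 'a set" where
  "aclDn M \<Delta> k A = \<Union> {sols M \<phi> as | n \<phi> as. (n, \<phi>) \<in> \<Delta> \<and> set as \<subseteq> A \<and>
                        length as = n \<and> finite (sols M \<phi> as) \<and> card (sols M \<phi> as) \<le> k}"

definition all_xfms :: "(nat \<times> ('f,'p) fm) set" where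
  "all_xfms = {p. wf_xfm p}"

definition acl_n :: "('a,'f,'p) struc \<Rightarrow> nat \<Rightarrow> 'a set \<Rightarrow> 'a set" where
  "acl_n M k = aclDn M all_xfms k"

definition regular_op :: "('a,'f,'p) struc \<Rightarrow> ('a set \<Rightarrow> 'a set) \<Rightarrow> bool" where
  "regular_op M cl \<longleftrightarrow> (\<forall>A. A \<subseteq> univ M \<longrightarrow> A \<subseteq> cl A \<and> cl (cl A) \<subseteq> cl A)"

definition op_le :: "('a,'f,'p) struc \<Rightarrow> ('a set \<Rightarrow> 'a set) \<Rightarrow> ('a set \<Rightarrow> 'a set) \<Rightarrow> bool" where
  "op_le M c1 c2 \<longleftrightarrow> (\<forall>A. A \<subseteq> univ M \<longrightarrow> c1 A \<subseteq> c2 A)"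

definition SL_acl :: "('a,'f,'p) struc \<Rightarrow> ('a set \<Rightarrow> 'a set) set" where
  "SL_acl M = {cl. \<exists>\<Delta>. \<Delta> \<subseteq> all_xfms \<and> cl = aclD M \<Delta> \<and> regular_op M cl}"

definition SL_acl_n :: "('a,'f,'p) struc \<Rightarrow> nat \<Rightarrow> ('a set \<Rightarrow> 'a set) set" where
  "SL_acl_n M k = {cl. \<exists>\<Delta>. \<Delta> \<subseteq> all_xfms \<and> cl = aclDn M \<Delta> k \<and> regular_op M cl}"

definition meet_semilattice_by_inter :: "('a,'f,'p) struc \<Rightarrow> ('a set \<Rightarrow> 'a set) set \<Rightarrow> bool" where
  "meet_semilattice_by_inter M S \<longleftrightarrow>
     (\<forall>c1\<in>S. \<forall>c2\<in>S. (\<lambda>A. c1 A \<inter> c2 A) \<in> S \<and>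
        op_le M (\<lambda>A. c1 A \<inter> c2 A) c1 \<and> op_le M (\<lambda>A. c1 A \<inter> c2 A) c2 \<and>
        (\<forall>c\<in>S. op_le M c c1 \<and> op_le M c c2 \<longrightarrow> op_le M c (\<lambda>A. c1 A \<inter> c2 A)))"

definition has_least :: "('a,'f,'p) struc \<Rightarrow> ('a set \<Rightarrow> 'a set) set \<Rightarrow> bool" where
  "has_least M S \<longleftrightarrow> (\<exists>c\<in>S. \<forall>d\<in>S. op_le M c d)"

definition has_greatest :: "('a,'f,'p) struc \<Rightarrow> ('a set \<Rightarrow> 'a set) set \<Rightarrow> bool" where
  "has_greatest M S \<longleftrightarrow> (\<exists>c\<in>S. \<forall>d\<in>S. op_le M d c)"

end

theory Submission
  imports Defs "HOL-Combinatorics.Transposition"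
begin

text \<open>Meets: the pointwise intersection of \<open>acl\<^bsup>\<Delta>1\<^esup>\<close> and \<open>acl\<^bsup>\<Delta>2\<^esup>\<close> is \<open>acl\<^bsup>\<Delta>\<^esup>\<close> for
  the set \<open>\<Delta>\<close> of conjunctions \<open>\<phi>\<^sub>1(x, a) \<and> \<phi>\<^sub>2(x, a')\<close> guarded by ``\<open>\<phi>\<^sub>1(\<midarrow>, a)\<close> and
  \<open>\<phi>\<^sub>2(\<midarrow>, a')\<close> have at most \<open>k\<close> solutions'' (for every \<open>k\<close>, resp. for the fixed bound \<open>n\<close>);
  without the guards an algebraic conjunction could come from a non-algebraic conjunct.

  Extremal elements: \<open>x = y\<close> yields the least operator \<open>A \<mapsto> A\<close>, and \<open>acl\<close> is the greatest.
  Its idempotence is the transitivity of algebraic closure: a parameter \<open>c\<close> algebraic over \<open>A\<close>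
  via \<open>\<psi>(w, d)\<close> is eliminated from \<open>\<phi>(x, p, c)\<close> by
  \<open>\<exists>w. \<psi>(w, d) \<and> \<phi>(x, p, w) \<and> |\<phi>(\<midarrow>, p, w)| \<le> |\<phi>(\<midarrow>, p, c)|\<close>.\<close>

section \<open>Renaming and counting solutions\<close>

lemma teval_cong: "(\<And>i. i \<in> tvars t \<Longrightarrow> e i = e' i) \<Longrightarrow> teval M e t = teval M e' t"
proof (induction t)
  case (Fn g ts)
  then have "map (teval M e) ts = map (teval M e') ts"
    by (auto simp: map_eq_conv)
  then show ?case by (metis teval.simps(2))
qed simp

lemma sat_cong: "(\<And>i. i \<in> fvars \<phi> \<Longrightarrow> e i = e' i) \<Longrightarrow> sat M e \<phi> = sat M e' \<phi>"
proof (induction \<phi> arbitrary: e e')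
  case (FEq s t)
  then have "teval M e s = teval M e' s" "teval M e t = teval M e' t"
    by (auto intro!: teval_cong)
  then show ?case by simp
next
  case (FRel p ts)
  then have "map (teval M e) ts = map (teval M e') ts"
    by (auto simp: map_eq_conv intro!: teval_cong)
  then show ?case by (metis sat.simps(2))
next
  case (FNeg \<phi>)
  have "sat M e \<phi> = sat M e' \<phi>"
    using FNeg.prems by (intro FNeg.IH) simp
  then show ?case by simp
next
  case (FConj \<phi> \<psi>)
  have "sat M e \<phi> = sat M e' \<phi>" "sat M e \<psi> = sat M e' \<psi>"
    using FConj.prems by (intro FConj.IH; simp)+
  then show ?case by simp
next
  case (FEx v \<phi>)
  have "sat M (e(v := b)) \<phi> = sat M (e'(v := b)) \<phi>" for b
    using FEx.prems by (intro FEx.IH) auto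
  then show ?case by simp
qed

fun rename_trm :: "(nat \<Rightarrow> nat) \<Rightarrow> 'f trm \<Rightarrow> 'f trm" where
  "rename_trm f (Var n) = Var (f n)"
| "rename_trm f (Fn g ts) = Fn g (map (rename_trm f) ts)"

fun rename_fm :: "(nat \<Rightarrow> nat) \<Rightarrow> ('f,'p) fm \<Rightarrow> ('f,'p) fm" where
  "rename_fm f (FEq s t) = FEq (rename_trm f s) (rename_trm f t)"
| "rename_fm f (FRel p ts) = FRel p (map (rename_trm f) ts)"
| "rename_fm f (FNeg \<phi>) = FNeg (rename_fm f \<phi>)"
| "rename_fm f (FConj \<phi> \<psi>) = FConj (rename_fm f \<phi>) (rename_fm f \<psi>)"
| "rename_fm f (FEx v \<phi>) = FEx (f v) (rename_fm f \<phi>)"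

lemma teval_rename_trm: "teval M e (rename_trm f t) = teval M (e \<circ> f) t"
  by (induction t) (simp_all cong: map_cong)

lemma tvars_rename_trm: "tvars (rename_trm f t) = f ` tvars t"
  by (induction t) auto

lemma fvars_rename_fm: "fvars (rename_fm f \<phi>) \<subseteq> f ` fvars \<phi>"
  by (induction \<phi>) (auto simp: tvars_rename_trm)

lemma sat_rename_fm: "inj f \<Longrightarrow> sat M e (rename_fm f \<phi>) = sat M (e \<circ> f) \<phi>"
proof (induction \<phi> arbitrary: e)
  case (FEx v \<phi>)
  then have "(\<lambda>a. if f a = f v then b else e (f a)) = (\<lambda>a. e (f a))(v := b)" for b
    by (auto simp: fun_eq_iff inj_def)
  then show ?case using FEx by simp
qed (auto simp: teval_rename_trm comp_def)

lemma sat_rename_fm_cong: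
  assumes "inj f" and "\<And>i. i \<in> fvars \<phi> \<Longrightarrow> e (f i) = e' i"
  shows "sat M e (rename_fm f \<phi>) = sat M e' \<phi>"
  using assms by (simp add: sat_rename_fm sat_cong[of \<phi> "e \<circ> f" e'])

fun FExs :: "nat list \<Rightarrow> ('f,'p) fm \<Rightarrow> ('f,'p) fm" where
  "FExs [] \<psi> = \<psi>"
| "FExs (v # vs) \<psi> = FEx v (FExs vs \<psi>)"

lemma fvars_FExs: "fvars (FExs vs \<psi>) = fvars \<psi> - set vs"
  by (induction vs) auto

lemma sat_FExs: "sat M e (FExs vs \<psi>) \<longleftrightarrow>
   (\<exists>g. (\<forall>v\<in>set vs. g v \<in> univ M) \<and> sat M (\<lambda>i. if i \<in> set vs then g i else e i) \<psi>)"
proof (induction vs arbitrary: e)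
  case (Cons v vs)
  show ?case
  proof
    assume "sat M e (FExs (v # vs) \<psi>)"
    then obtain b g where "b \<in> univ M" "\<forall>v\<in>set vs. g v \<in> univ M"
      and "sat M (\<lambda>i. if i \<in> set vs then g i else (e(v := b)) i) \<psi>"
      using Cons by auto
    moreover have "(\<lambda>i. if i \<in> set vs then g i else (e(v := b)) i) =
        (\<lambda>i. if i \<in> set (v # vs) then (if i \<in> set vs then g i else b) else e i)"
      by (auto simp: fun_eq_iff)
    ultimately show "\<exists>g. (\<forall>v\<in>set (v # vs). g v \<in> univ M) \<and>
        sat M (\<lambda>i. if i \<in> set (v # vs) then g i else e i) \<psi>"
      by (intro exI[of _ "\<lambda>i. if i \<in> set vs then g i else b"]) auto
  next
    assume "\<exists>g. (\<forall>v\<in>set (v # vs). g v \<in> univ M) \<and>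
        sat M (\<lambda>i. if i \<in> set (v # vs) then g i else e i) \<psi>"
    then obtain g where g: "\<forall>v\<in>set (v # vs). g v \<in> univ M"
      and "sat M (\<lambda>i. if i \<in> set (v # vs) then g i else e i) \<psi>" by blast
    moreover have "(\<lambda>i. if i \<in> set vs then g i else (e(v := g v)) i) =
        (\<lambda>i. if i \<in> set (v # vs) then g i else e i)"
      by (auto simp: fun_eq_iff)
    ultimately have "sat M (e(v := g v)) (FExs vs \<psi>)"
      unfolding Cons.IH[of "e(v := g v)"] by (intro exI[of _ g]) auto
    then show "sat M e (FExs (v # vs) \<psi>)" using g by auto
  qed
qed simp

fun FConjs :: "('f,'p) fm list \<Rightarrow> ('f,'p) fm" where
  "FConjs [] = FEq (Var 0) (Var 0)"
| "FConjs (\<phi> # \<phi>s) = FConj \<phi> (FConjs \<phi>s)"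

lemma sat_FConjs: "sat M e (FConjs \<phi>s) \<longleftrightarrow> (\<forall>\<phi>\<in>set \<phi>s. sat M e \<phi>)"
  by (induction \<phi>s) auto

lemma fvars_FConjs: "fvars (FConjs \<phi>s) \<subseteq> {0} \<union> \<Union> (fvars ` set \<phi>s)"
  by (induction \<phi>s) auto

lemma ex_inj_into_iff:
  assumes "finite Z"
  shows "(\<exists>g. g ` Z \<subseteq> S \<and> inj_on g Z) \<longleftrightarrow> \<not> (finite S \<and> card S < card Z)"
proof
  assume "\<exists>g. g ` Z \<subseteq> S \<and> inj_on g Z"
  then obtain g where "g ` Z \<subseteq> S" "inj_on g Z" by blast
  then show "\<not> (finite S \<and> card S < card Z)"
    using card_inj_on_le[of g Z S] by auto
next
  assume S: "\<not> (finite S \<and> card S < card Z)"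
  obtain B where B: "B \<subseteq> S" "finite B" "card Z \<le> card B"
  proof (cases "finite S")
    case True
    then show ?thesis using S that[of S] by simp
  next
    case False
    then obtain B where "finite B" "card B = card Z" "B \<subseteq> S"
      using infinite_arbitrarily_large by blast
    then show ?thesis using that by simp
  qed
  obtain g where "g ` Z \<subseteq> B" "inj_on g Z"
    using card_le_inj[OF assms B(2,3)] by blast
  then show "\<exists>g. g ` Z \<subseteq> S \<and> inj_on g Z"
    using B(1) by blast
qed

text \<open>Swapping \<open>0\<close> and \<open>z\<close> substitutes \<open>z\<close> for \<open>x\<close> in \<open>\<phi>(x, \<dots>)\<close> only if \<open>z\<close> is fresh for \<open>\<phi>\<close>.\<close>
definition distinct_sols_fm :: "nat list \<Rightarrow> ('f,'p) fm \<Rightarrow> ('f,'p) fm" where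
  "distinct_sols_fm zs \<phi> = FConjs ([rename_fm (Transposition.transpose 0 z) \<phi>. z \<leftarrow> zs] @
     [FNeg (FEq (Var z) (Var z')). z \<leftarrow> zs, z' \<leftarrow> zs, z \<noteq> z'])"

lemma fvars_distinct_sols_fm:
  assumes "fvars \<phi> \<subseteq> {0..N}"
  shows "fvars (distinct_sols_fm zs \<phi>) \<subseteq> {0..N} \<union> set zs"
proof -
  have "fvars (rename_fm (Transposition.transpose 0 z) \<phi>) \<subseteq> {0..N} \<union> {z}" for z
    using fvars_rename_fm[of "Transposition.transpose 0 z" \<phi>] assms
    by (auto simp: Transposition.transpose_def)
  then show ?thesis
    unfolding distinct_sols_fm_def
    by (intro order_trans[OF fvars_FConjs]) (fastforce split: if_splits)
qed

lemma sat_distinct_sols_fm: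
  assumes "fvars \<phi> \<subseteq> {0..N}" and "\<forall>z\<in>set zs. N < z"
  shows "sat M (\<lambda>i. if i \<in> set zs then g i else e i) (distinct_sols_fm zs \<phi>)
    \<longleftrightarrow> (\<forall>z\<in>set zs. sat M (e(0 := g z)) \<phi>) \<and> inj_on g (set zs)"
proof -
  have fresh: "i \<notin> set zs" if "i \<in> fvars \<phi>" for i
    using that assms by fastforce
  have "sat M (\<lambda>i. if i \<in> set zs then g i else e i) (rename_fm (Transposition.transpose 0 z) \<phi>)
      \<longleftrightarrow> sat M (e(0 := g z)) \<phi>" if "z \<in> set zs" for z
    using that fresh by (intro sat_rename_fm_cong) (auto simp: Transposition.transpose_def)
  moreover have "(\<forall>\<psi>\<in>set [FNeg (FEq (Var z) (Var z')). z \<leftarrow> zs, z' \<leftarrow> zs, z \<noteq> z'].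
      sat M (\<lambda>i. if i \<in> set zs then g i else e i) \<psi>) \<longleftrightarrow> inj_on g (set zs)"
    by (auto simp: inj_on_def)
  ultimately show ?thesis
    unfolding distinct_sols_fm_def sat_FConjs set_append ball_Un by simp
qed

text \<open>The \<open>k + 1\<close> witnesses \<open>N + 1, \<dots>, N + k + 1\<close> are fresh for \<open>\<phi>(x, y\<^sub>1, \<dots>, y\<^sub>N)\<close>.\<close>
definition at_most_fm :: "nat \<Rightarrow> nat \<Rightarrow> ('f,'p) fm \<Rightarrow> ('f,'p) fm" where
  "at_most_fm k N \<phi> = (let zs = [Suc N..<N + k + 2] in FNeg (FExs zs (distinct_sols_fm zs \<phi>)))"

lemma fvars_at_most_fm: "fvars \<phi> \<subseteq> {0..N} \<Longrightarrow> fvars (at_most_fm k N \<phi>) \<subseteq> {0..N}"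
  using fvars_distinct_sols_fm[of \<phi> N "[Suc N..<N + k + 2]"]
  by (auto simp: at_most_fm_def Let_def fvars_FExs simp del: upt_Suc)

lemma sat_at_most_fm:
  assumes "fvars \<phi> \<subseteq> {0..N}"
  shows "sat M e (at_most_fm k N \<phi>) \<longleftrightarrow>
     finite {c \<in> univ M. sat M (e(0 := c)) \<phi>} \<and> card {c \<in> univ M. sat M (e(0 := c)) \<phi>} \<le> k"
proof -
  define zs where "zs = [Suc N..<N + k + 2]"
  define S where "S = {c \<in> univ M. sat M (e(0 := c)) \<phi>}"
  have zs: "\<forall>z\<in>set zs. N < z" "card (set zs) = Suc k"
    by (simp_all add: zs_def del: upt_Suc)
  have "sat M e (at_most_fm k N \<phi>) \<longleftrightarrow>
      \<not> (\<exists>g. (\<forall>z\<in>set zs. g z \<in> univ M) \<and> (\<forall>z\<in>set zs. sat M (e(0 := g z)) \<phi>) \<and> inj_on g (set zs))"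
    unfolding at_most_fm_def zs_def[symmetric] Let_def
    by (simp add: sat_FExs sat_distinct_sols_fm[OF assms zs(1)])
  also have "\<dots> \<longleftrightarrow> \<not> (\<exists>g. g ` set zs \<subseteq> S \<and> inj_on g (set zs))"
    unfolding S_def by blast
  also have "\<dots> \<longleftrightarrow> finite S \<and> card S \<le> k"
    using ex_inj_into_iff[of "set zs" S] zs(2) by auto
  finally show ?thesis unfolding S_def .
qed

lemma env_snoc: "env x (L @ [d]) = (env x L)(Suc (length L) := d)"
  by (auto simp: fun_eq_iff env_def nth_append)

lemma env_append: "i \<le> length L \<Longrightarrow> env x (L @ L') i = env x L i"
  by (cases i) (auto simp: env_def nth_append)

definition shift_params :: "nat \<Rightarrow> nat \<Rightarrow> nat" where
  "shift_params n i = (if i = 0 then 0 else n + i)"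

lemma inj_shift_params: "inj (shift_params n)"
  by (auto simp: inj_def shift_params_def)

lemma env_append_shift_params:
  "i \<le> length L' \<Longrightarrow> env x (L @ L') (shift_params (length L) i) = env x L' i"
  by (cases i) (auto simp: env_def nth_append shift_params_def)

lemma fvars_rename_shift_params:
  "fvars \<phi> \<subseteq> {0..n'} \<Longrightarrow> fvars (rename_fm (shift_params n) \<phi>) \<subseteq> {0..n + n'}"
  using fvars_rename_fm[of "shift_params n" \<phi>] by (force simp: shift_params_def)

lemma sat_env_upd_0:
  "fvars \<phi> \<subseteq> {0..length L} \<Longrightarrow> sat M ((env x L)(0 := y)) \<phi> = sat M (env y L) \<phi>"
  by (rule sat_cong) (auto simp: env_def)

lemma sat_env_append:
  "fvars \<phi> \<subseteq> {0..length L} \<Longrightarrow> sat M (env x (L @ L')) \<phi> = sat M (env x L) \<phi>"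
  by (rule sat_cong) (auto simp: env_append)

lemma sat_env_rename_shift_params:
  "fvars \<phi> \<subseteq> {0..length L'} \<Longrightarrow>
    sat M (env x (L @ L')) (rename_fm (shift_params (length L)) \<phi>) = sat M (env x L') \<phi>"
  by (rule sat_rename_fm_cong[OF inj_shift_params]) (auto simp: env_append_shift_params)

lemma sols_append: "fvars \<phi> \<subseteq> {0..length L} \<Longrightarrow> sols M \<phi> (L @ L') = sols M \<phi> L"
  by (simp add: sols_def sat_env_append)

lemma sols_rename_shift_params:
  "fvars \<phi> \<subseteq> {0..length L'} \<Longrightarrow>
    sols M (rename_fm (shift_params (length L)) \<phi>) (L @ L') = sols M \<phi> L'"
  by (simp add: sols_def sat_env_rename_shift_params)

lemma sat_env_at_most_fm:
  assumes "fvars \<phi> \<subseteq> {0..length L}"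
  shows "sat M (env x L) (at_most_fm k (length L) \<phi>) \<longleftrightarrow>
    finite (sols M \<phi> L) \<and> card (sols M \<phi> L) \<le> k"
proof -
  have "{c \<in> univ M. sat M ((env x L)(0 := c)) \<phi>} = sols M \<phi> L"
    using assms by (simp add: sols_def sat_env_upd_0)
  then show ?thesis using sat_at_most_fm[OF assms, of M "env x L" k] by simp
qed

section \<open>Transitivity of algebraic closure\<close>

text \<open>\<open>\<exists>w. \<psi>(w, d\<^sub>1, \<dots>, d\<^sub>m) \<and> \<phi>(x, p\<^sub>1, \<dots>, p\<^sub>p, w) \<and> |\<phi>(\<midarrow>, p\<^sub>1, \<dots>, p\<^sub>p, w)| \<le> k\<close>
  with parameters \<open>d\<^sub>1, \<dots>, d\<^sub>m, p\<^sub>1, \<dots>, p\<^sub>p\<close> and the bound variable \<open>w = m + p + 1\<close>.\<close>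
definition elim_param_fm :: "nat \<Rightarrow> nat \<Rightarrow> nat \<Rightarrow> ('f,'p) fm \<Rightarrow> ('f,'p) fm \<Rightarrow> ('f,'p) fm" where
  "elim_param_fm k m p \<psi> \<phi> = (let w = Suc (m + p); \<phi>' = rename_fm (shift_params m) \<phi> in
     FEx w (FConj (rename_fm (Transposition.transpose 0 w) \<psi>) (FConj \<phi>' (at_most_fm k w \<phi>'))))"

lemma fvars_elim_param_fm:
  assumes "fvars \<psi> \<subseteq> {0..m}" and "fvars \<phi> \<subseteq> {0..Suc p}"
  shows "fvars (elim_param_fm k m p \<psi> \<phi>) \<subseteq> {0..m + p}"
proof -
  define w where "w = Suc (m + p)"
  have "fvars (rename_fm (Transposition.transpose 0 w) \<psi>) \<subseteq> {0..w}"
    using fvars_rename_fm[of "Transposition.transpose 0 w" \<psi>] assms(1)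
    by (force simp: w_def Transposition.transpose_def)
  moreover have \<phi>': "fvars (rename_fm (shift_params m) \<phi>) \<subseteq> {0..w}"
    using fvars_rename_shift_params[OF assms(2)] by (simp add: w_def)
  ultimately show ?thesis
    using fvars_at_most_fm[OF \<phi>', of k] unfolding elim_param_fm_def w_def[symmetric] Let_def
    by (auto simp: w_def)
qed

lemma sols_elim_param_fm:
  assumes \<psi>: "fvars \<psi> \<subseteq> {0..length ds}" and \<phi>: "fvars \<phi> \<subseteq> {0..Suc (length ps)}"
  shows "sols M (elim_param_fm k (length ds) (length ps) \<psi> \<phi>) (ds @ ps) =
    {x \<in> univ M. \<exists>d \<in> sols M \<psi> ds. x \<in> sols M \<phi> (ps @ [d]) \<and>
       finite (sols M \<phi> (ps @ [d])) \<and> card (sols M \<phi> (ps @ [d])) \<le> k}"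
proof -
  define w where "w = Suc (length ds + length ps)"
  define \<phi>' where "\<phi>' = rename_fm (shift_params (length ds)) \<phi>"
  have \<phi>'_fvars: "fvars \<phi>' \<subseteq> {0..length (ds @ ps @ [d])}" for d
    using fvars_rename_shift_params[OF \<phi>] by (simp add: \<phi>'_def)
  have sat_\<psi>: "sat M (env x (ds @ ps @ [d])) (rename_fm (Transposition.transpose 0 w) \<psi>)
      \<longleftrightarrow> sat M (env d ds) \<psi>" for x d
    using \<psi> by (intro sat_rename_fm_cong)
      (auto simp: w_def Transposition.transpose_def env_def nth_append)
  have sat_\<phi>': "sat M (env x (ds @ ps @ [d])) \<phi>' \<longleftrightarrow> sat M (env x (ps @ [d])) \<phi>" for x d
    using sat_env_rename_shift_params[of \<phi> "ps @ [d]"] \<phi> by (simp add: \<phi>'_def)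
  have bound_\<phi>': "sat M (env x (ds @ ps @ [d])) (at_most_fm k w \<phi>') \<longleftrightarrow>
      finite (sols M \<phi> (ps @ [d])) \<and> card (sols M \<phi> (ps @ [d])) \<le> k" for x d
    using sat_env_at_most_fm[OF \<phi>'_fvars] sols_rename_shift_params[of \<phi> "ps @ [d]"] \<phi>
    by (simp add: w_def \<phi>'_def)
  have "(env x (ds @ ps))(w := d) = env x (ds @ ps @ [d])" for x d
    using env_snoc[of x "ds @ ps" d] by (simp add: w_def)
  then show ?thesis
    unfolding elim_param_fm_def Let_def w_def[symmetric] \<phi>'_def[symmetric]
    by (auto simp: sols_def sat_\<psi> sat_\<phi>' bound_\<phi>')
qed

abbreviation acl :: "('a,'f,'p) struc \<Rightarrow> 'a set \<Rightarrow> 'a set" where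
  "acl M \<equiv> aclD M all_xfms"

lemma mem_all_xfms [simp]: "(n, \<phi>) \<in> all_xfms \<longleftrightarrow> fvars \<phi> \<subseteq> {0..n}"
  by (simp add: all_xfms_def wf_xfm_def)

lemma fvars_subset_if_mem_xfms:
  assumes "\<Delta> \<subseteq> all_xfms" and "(n, \<phi>) \<in> \<Delta>"
  shows "fvars \<phi> \<subseteq> {0..n}"
  using subsetD[OF assms] by simp

lemma mem_aclD_iff:
  "x \<in> aclD M \<Delta> A \<longleftrightarrow> (\<exists>n \<phi> as. (n, \<phi>) \<in> \<Delta> \<and> set as \<subseteq> A \<and> length as = n \<and>
     finite (sols M \<phi> as) \<and> x \<in> sols M \<phi> as)"
  unfolding aclD_def by blast

lemma mem_aclDn_iff:
  "x \<in> aclDn M \<Delta> k A \<longleftrightarrow> (\<exists>n \<phi> as. (n, \<phi>) \<in> \<Delta> \<and> set as \<subseteq> A \<and> length as = n \<and>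
     finite (sols M \<phi> as) \<and> card (sols M \<phi> as) \<le> k \<and> x \<in> sols M \<phi> as)"
  unfolding aclDn_def by blast

lemma finite_sols_subset_acl:
  assumes "fvars \<phi> \<subseteq> {0..length (bs @ cs)}" and "set bs \<subseteq> A" and "set cs \<subseteq> acl M A"
    and "finite (sols M \<phi> (bs @ cs))"
  shows "sols M \<phi> (bs @ cs) \<subseteq> acl M A"
  using assms
proof (induction cs arbitrary: \<phi> bs rule: rev_induct)
  case Nil
  then show ?case
    by (auto simp: mem_aclD_iff intro!: exI[of _ "length bs"] exI[of _ \<phi>] exI[of _ bs])
next
  case (snoc c cs)
  define ps where "ps = bs @ cs"
  obtain \<psi> ds where \<psi>: "fvars \<psi> \<subseteq> {0..length ds}" "set ds \<subseteq> A" "finite (sols M \<psi> ds)"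
    "c \<in> sols M \<psi> ds"
    using snoc.prems(3) by (auto simp: mem_aclD_iff)
  have \<phi>: "fvars \<phi> \<subseteq> {0..Suc (length ps)}"
    using snoc.prems(1) by (simp add: ps_def)
  \<comment> \<open>with this \<open>k\<close> the guard of \<open>\<chi>\<close> holds at \<open>w = c\<close>; \<open>\<chi>\<close> stays algebraic as \<open>\<psi>(\<midarrow>, ds)\<close> is finite\<close>
  define k where "k = card (sols M \<phi> (ps @ [c]))"
  define \<chi> where "\<chi> = elim_param_fm k (length ds) (length ps) \<psi> \<phi>"
  note sols_\<chi> = sols_elim_param_fm[OF \<psi>(1) \<phi>, of M k, folded \<chi>_def]
  have "sols M \<chi> (ds @ ps) \<subseteq>
      (\<Union>d\<in>sols M \<psi> ds. if finite (sols M \<phi> (ps @ [d])) then sols M \<phi> (ps @ [d]) else {})"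
    unfolding sols_\<chi> by auto
  then have "finite (sols M \<chi> (ds @ ps))"
    by (rule finite_subset) (use \<psi>(3) in auto)
  moreover have "fvars \<chi> \<subseteq> {0..length ((ds @ bs) @ cs)}"
    using fvars_elim_param_fm[OF \<psi>(1) \<phi>] by (simp add: \<chi>_def ps_def)
  ultimately have "sols M \<chi> ((ds @ bs) @ cs) \<subseteq> acl M A"
    using snoc.prems \<psi>(2) by (intro snoc.IH) (auto simp: ps_def)
  moreover have "sols M \<phi> (ps @ [c]) \<subseteq> sols M \<chi> (ds @ ps)"
    unfolding sols_\<chi> using snoc.prems(4) \<psi>(4) by (auto simp: ps_def k_def sols_def)
  ultimately show ?case by (simp add: ps_def)
qed

definition eq_xfm :: "nat \<times> ('f,'p) fm" where
  "eq_xfm = (1, FEq (Var 0) (Var 1))"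

lemma eq_xfm_in_all_xfms: "eq_xfm \<in> all_xfms"
  by (simp add: eq_xfm_def)

lemma sols_eq_xfm: "sols M (snd eq_xfm) [a] = {a} \<inter> univ M"
  by (auto simp: sols_def eq_xfm_def env_def)

lemma aclD_eq_xfm: "aclD M {eq_xfm} A = A \<inter> univ M"
proof (intro set_eqI iffI)
  fix x assume "x \<in> aclD M {eq_xfm} A"
  then obtain as where "set as \<subseteq> A" "length as = 1" "x \<in> sols M (snd eq_xfm) as"
    by (auto simp: mem_aclD_iff eq_xfm_def)
  then show "x \<in> A \<inter> univ M"
    by (auto simp: length_Suc_conv sols_eq_xfm)
next
  fix x assume "x \<in> A \<inter> univ M"
  then show "x \<in> aclD M {eq_xfm} A"
    unfolding mem_aclD_iff using sols_eq_xfm[of M x]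
    by (intro exI[of _ 1] exI[of _ "snd eq_xfm"] exI[of _ "[x]"]) (simp add: eq_xfm_def)
qed

lemma aclDn_eq_aclD:
  assumes "\<And>n \<phi> as. (n, \<phi>) \<in> \<Delta> \<Longrightarrow> length as = n \<Longrightarrow> finite (sols M \<phi> as) \<Longrightarrow>
    card (sols M \<phi> as) \<le> k"
  shows "aclDn M \<Delta> k A = aclD M \<Delta> A"
  using assms by (fastforce simp: mem_aclD_iff mem_aclDn_iff)

lemma aclDn_eq_xfm: "0 < k \<Longrightarrow> aclDn M {eq_xfm} k A = A \<inter> univ M"
proof -
  assume "0 < k"
  then have "card (sols M \<phi> as) \<le> k" if "(n, \<phi>) \<in> {eq_xfm}" "length as = n" for n \<phi> as
    using that sols_eq_xfm[of M] by (auto simp: eq_xfm_def length_Suc_conv Int_insert_left)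
  then show ?thesis
    using aclD_eq_xfm aclDn_eq_aclD by metis
qed

lemma aclD_mono: "A \<subseteq> B \<Longrightarrow> aclD M \<Delta> A \<subseteq> aclD M \<Delta> B"
  by (fastforce simp: mem_aclD_iff)

lemma aclDn_mono: "A \<subseteq> B \<Longrightarrow> aclDn M \<Delta> k A \<subseteq> aclDn M \<Delta> k B"
  by (fastforce simp: mem_aclDn_iff)

lemma aclD_mono_formulas: "\<Delta> \<subseteq> \<Delta>' \<Longrightarrow> aclD M \<Delta> A \<subseteq> aclD M \<Delta>' A"
  by (fastforce simp: mem_aclD_iff)

lemma aclDn_mono_formulas: "\<Delta> \<subseteq> \<Delta>' \<Longrightarrow> aclDn M \<Delta> k A \<subseteq> aclDn M \<Delta>' k A"
  by (fastforce simp: mem_aclDn_iff)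

lemma aclDn_mono_bound: "k \<le> k' \<Longrightarrow> aclDn M \<Delta> k A \<subseteq> aclDn M \<Delta> k' A"
  by (fastforce simp: mem_aclDn_iff)

lemma aclD_eq_UN_aclDn: "aclD M \<Delta> A = (\<Union>k. aclDn M \<Delta> k A)"
  by (fastforce simp: mem_aclD_iff mem_aclDn_iff)

lemma regular_op_acl: "regular_op M (acl M)"
  unfolding regular_op_def
proof (intro allI impI conjI)
  fix A assume "A \<subseteq> univ M"
  then have "A = aclD M {eq_xfm} A" by (simp add: aclD_eq_xfm Int_absorb2)
  also have "\<dots> \<subseteq> acl M A"
    by (rule aclD_mono_formulas) (simp add: eq_xfm_in_all_xfms)
  finally show "A \<subseteq> acl M A" .
  show "acl M (acl M A) \<subseteq> acl M A"
  proof
    fix x assume "x \<in> acl M (acl M A)"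
    then obtain \<phi> as where \<phi>: "fvars \<phi> \<subseteq> {0..length ([] @ as)}" "set as \<subseteq> acl M A"
      "finite (sols M \<phi> ([] @ as))" and x: "x \<in> sols M \<phi> ([] @ as)"
      by (auto simp: mem_aclD_iff)
    have "sols M \<phi> ([] @ as) \<subseteq> acl M A"
      using \<phi> by (intro finite_sols_subset_acl) auto
    with x show "x \<in> acl M A" by blast
  qed
qed

section \<open>Meets\<close>

definition meet_fm :: "nat \<Rightarrow> nat \<Rightarrow> nat \<Rightarrow> ('f,'p) fm \<Rightarrow> ('f,'p) fm \<Rightarrow> ('f,'p) fm" where
  "meet_fm k n1 n2 \<phi>1 \<phi>2 = (let \<phi>2' = rename_fm (shift_params n1) \<phi>2 in
     FConj (FConj \<phi>1 \<phi>2') (FConj (at_most_fm k (n1 + n2) \<phi>1) (at_most_fm k (n1 + n2) \<phi>2')))"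

lemma fvars_meet_fm:
  assumes "fvars \<phi>1 \<subseteq> {0..n1}" and "fvars \<phi>2 \<subseteq> {0..n2}"
  shows "fvars (meet_fm k n1 n2 \<phi>1 \<phi>2) \<subseteq> {0..n1 + n2}"
proof -
  have \<phi>1: "fvars \<phi>1 \<subseteq> {0..n1 + n2}" using assms(1) by auto
  have \<phi>2': "fvars (rename_fm (shift_params n1) \<phi>2) \<subseteq> {0..n1 + n2}"
    by (rule fvars_rename_shift_params[OF assms(2)])
  show ?thesis
    using \<phi>1 \<phi>2' fvars_at_most_fm[OF \<phi>1, of k] fvars_at_most_fm[OF \<phi>2', of k]
    by (auto simp: meet_fm_def Let_def)
qed

lemma sols_meet_fm:
  assumes \<phi>1: "fvars \<phi>1 \<subseteq> {0..length a}" and \<phi>2: "fvars \<phi>2 \<subseteq> {0..length a'}"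
  shows "sols M (meet_fm k (length a) (length a') \<phi>1 \<phi>2) (a @ a') =
    (if finite (sols M \<phi>1 a) \<and> card (sols M \<phi>1 a) \<le> k \<and>
        finite (sols M \<phi>2 a') \<and> card (sols M \<phi>2 a') \<le> k
     then sols M \<phi>1 a \<inter> sols M \<phi>2 a' else {})"
proof -
  define \<phi>2' where "\<phi>2' = rename_fm (shift_params (length a)) \<phi>2"
  have \<phi>1': "fvars \<phi>1 \<subseteq> {0..length (a @ a')}" using \<phi>1 by auto
  have \<phi>2'_fvars: "fvars \<phi>2' \<subseteq> {0..length (a @ a')}"
    using fvars_rename_shift_params[OF \<phi>2] by (simp add: \<phi>2'_def)
  have "sat M (env x (a @ a')) (at_most_fm k (length a + length a') \<phi>1) \<longleftrightarrow>
      finite (sols M \<phi>1 a) \<and> card (sols M \<phi>1 a) \<le> k" for x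
    using sat_env_at_most_fm[OF \<phi>1'] sols_append[OF \<phi>1] by simp
  moreover have "sat M (env x (a @ a')) (at_most_fm k (length a + length a') \<phi>2') \<longleftrightarrow>
      finite (sols M \<phi>2 a') \<and> card (sols M \<phi>2 a') \<le> k" for x
    using sat_env_at_most_fm[OF \<phi>2'_fvars] sols_rename_shift_params[OF \<phi>2] by (simp add: \<phi>2'_def)
  ultimately show ?thesis
    using sat_env_append[OF \<phi>1] sat_env_rename_shift_params[OF \<phi>2]
    unfolding meet_fm_def Let_def \<phi>2'_def[symmetric]
    by (auto simp: sols_def \<phi>2'_def)
qed

definition meet_xfms :: "(nat \<times> ('f,'p) fm) set \<Rightarrow> (nat \<times> ('f,'p) fm) set \<Rightarrow> nat set \<Rightarrow>
    (nat \<times> ('f,'p) fm) set" where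
  "meet_xfms \<Delta>1 \<Delta>2 K = {(n1 + n2, meet_fm k n1 n2 \<phi>1 \<phi>2) | n1 \<phi>1 n2 \<phi>2 k.
     (n1, \<phi>1) \<in> \<Delta>1 \<and> (n2, \<phi>2) \<in> \<Delta>2 \<and> k \<in> K}"

lemma meet_xfms_subset_all_xfms:
  assumes "\<Delta>1 \<subseteq> all_xfms" and "\<Delta>2 \<subseteq> all_xfms"
  shows "meet_xfms \<Delta>1 \<Delta>2 K \<subseteq> all_xfms"
proof
  fix p assume "p \<in> meet_xfms \<Delta>1 \<Delta>2 K"
  then obtain n1 \<phi>1 n2 \<phi>2 k where "p = (n1 + n2, meet_fm k n1 n2 \<phi>1 \<phi>2)"
    "(n1, \<phi>1) \<in> \<Delta>1" "(n2, \<phi>2) \<in> \<Delta>2"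
    unfolding meet_xfms_def by blast
  then show "p \<in> all_xfms"
    using fvars_meet_fm[OF fvars_subset_if_mem_xfms[OF assms(1)] fvars_subset_if_mem_xfms[OF assms(2)]]
    by simp
qed

lemma sols_meet_xfmsE:
  assumes "(n, \<chi>) \<in> meet_xfms \<Delta>1 \<Delta>2 K" and "length cs = n"
    and "\<Delta>1 \<subseteq> all_xfms" and "\<Delta>2 \<subseteq> all_xfms"
  obtains n1 \<phi>1 n2 \<phi>2 k a a' where "(n1, \<phi>1) \<in> \<Delta>1" "(n2, \<phi>2) \<in> \<Delta>2" "k \<in> K"
    "cs = a @ a'" "length a = n1" "length a' = n2"
    "sols M \<chi> cs = (if finite (sols M \<phi>1 a) \<and> card (sols M \<phi>1 a) \<le> k \<and>
        finite (sols M \<phi>2 a') \<and> card (sols M \<phi>2 a') \<le> k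
      then sols M \<phi>1 a \<inter> sols M \<phi>2 a' else {})"
proof -
  obtain n1 \<phi>1 n2 \<phi>2 k where \<chi>: "n = n1 + n2" "\<chi> = meet_fm k n1 n2 \<phi>1 \<phi>2"
    "(n1, \<phi>1) \<in> \<Delta>1" "(n2, \<phi>2) \<in> \<Delta>2" "k \<in> K"
    using assms(1) unfolding meet_xfms_def by blast
  define a a' where "a = take n1 cs" and "a' = drop n1 cs"
  have a: "cs = a @ a'" "length a = n1" "length a' = n2"
    using assms(2) \<chi>(1) by (auto simp: a_def a'_def)
  have "fvars \<phi>1 \<subseteq> {0..length a}" "fvars \<phi>2 \<subseteq> {0..length a'}"
    using fvars_subset_if_mem_xfms[OF assms(3) \<chi>(3)] fvars_subset_if_mem_xfms[OF assms(4) \<chi>(4)] a(2,3)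
    by simp_all
  from sols_meet_fm[OF this, of M k] show ?thesis
    using that \<chi> a by simp
qed

lemma aclD_meet_xfms:
  assumes "\<Delta>1 \<subseteq> all_xfms" and "\<Delta>2 \<subseteq> all_xfms"
  shows "aclD M (meet_xfms \<Delta>1 \<Delta>2 K) A = (\<Union>k\<in>K. aclDn M \<Delta>1 k A \<inter> aclDn M \<Delta>2 k A)"
proof (intro set_eqI iffI)
  fix x assume "x \<in> aclD M (meet_xfms \<Delta>1 \<Delta>2 K) A"
  then obtain n \<chi> cs where \<chi>: "(n, \<chi>) \<in> meet_xfms \<Delta>1 \<Delta>2 K" "set cs \<subseteq> A" "length cs = n"
    "x \<in> sols M \<chi> cs"
    by (auto simp: mem_aclD_iff)
  from \<chi>(1,3) assms obtain n1 \<phi>1 n2 \<phi>2 k a a' where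
    "(n1, \<phi>1) \<in> \<Delta>1" "(n2, \<phi>2) \<in> \<Delta>2" "k \<in> K" "cs = a @ a'" "length a = n1" "length a' = n2"
    "sols M \<chi> cs = (if finite (sols M \<phi>1 a) \<and> card (sols M \<phi>1 a) \<le> k \<and>
        finite (sols M \<phi>2 a') \<and> card (sols M \<phi>2 a') \<le> k
      then sols M \<phi>1 a \<inter> sols M \<phi>2 a' else {})"
    by (rule sols_meet_xfmsE)
  with \<chi>(2,4) show "x \<in> (\<Union>k\<in>K. aclDn M \<Delta>1 k A \<inter> aclDn M \<Delta>2 k A)"
    by (auto simp: mem_aclDn_iff split: if_splits)
next
  fix x assume "x \<in> (\<Union>k\<in>K. aclDn M \<Delta>1 k A \<inter> aclDn M \<Delta>2 k A)"
  then obtain k n1 \<phi>1 a n2 \<phi>2 a' where k: "k \<in> K"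
    and \<phi>1: "(n1, \<phi>1) \<in> \<Delta>1" "set a \<subseteq> A" "length a = n1" "finite (sols M \<phi>1 a)"
      "card (sols M \<phi>1 a) \<le> k" "x \<in> sols M \<phi>1 a"
    and \<phi>2: "(n2, \<phi>2) \<in> \<Delta>2" "set a' \<subseteq> A" "length a' = n2" "finite (sols M \<phi>2 a')"
      "card (sols M \<phi>2 a') \<le> k" "x \<in> sols M \<phi>2 a'"
    by (auto simp: mem_aclDn_iff)
  have "fvars \<phi>1 \<subseteq> {0..length a}" "fvars \<phi>2 \<subseteq> {0..length a'}"
    using fvars_subset_if_mem_xfms[OF assms(1) \<phi>1(1)] fvars_subset_if_mem_xfms[OF assms(2) \<phi>2(1)]
      \<phi>1(3) \<phi>2(3)
    by simp_all
  note sols = sols_meet_fm[OF this, of M k]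
  have "(length (a @ a'), meet_fm k (length a) (length a') \<phi>1 \<phi>2) \<in> meet_xfms \<Delta>1 \<Delta>2 K"
    unfolding meet_xfms_def using k \<phi>1(1,3) \<phi>2(1,3) by force
  then show "x \<in> aclD M (meet_xfms \<Delta>1 \<Delta>2 K) A"
    unfolding mem_aclD_iff using sols \<phi>1 \<phi>2
    by (intro exI[of _ "length (a @ a')"] exI[of _ "meet_fm k (length a) (length a') \<phi>1 \<phi>2"]
        exI[of _ "a @ a'"]) auto
qed

lemma aclDn_meet_xfms:
  assumes "\<Delta>1 \<subseteq> all_xfms" and "\<Delta>2 \<subseteq> all_xfms"
  shows "aclDn M (meet_xfms \<Delta>1 \<Delta>2 {k}) k A = aclDn M \<Delta>1 k A \<inter> aclDn M \<Delta>2 k A"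
proof -
  have "card (sols M \<chi> cs) \<le> k"
    if "(n, \<chi>) \<in> meet_xfms \<Delta>1 \<Delta>2 {k}" "length cs = n" for n \<chi> cs
  proof -
    from that assms obtain n1 \<phi>1 n2 \<phi>2 k' a a' where "k' \<in> {k}"
      "sols M \<chi> cs = (if finite (sols M \<phi>1 a) \<and> card (sols M \<phi>1 a) \<le> k' \<and>
          finite (sols M \<phi>2 a') \<and> card (sols M \<phi>2 a') \<le> k'
        then sols M \<phi>1 a \<inter> sols M \<phi>2 a' else {})"
      by (rule sols_meet_xfmsE)
    then show ?thesis
      using card_mono[of "sols M \<phi>1 a" "sols M \<phi>1 a \<inter> sols M \<phi>2 a'"] by auto
  qed
  then have "aclDn M (meet_xfms \<Delta>1 \<Delta>2 {k}) k A = aclD M (meet_xfms \<Delta>1 \<Delta>2 {k}) A"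
    by (intro aclDn_eq_aclD)
  then show ?thesis
    by (simp add: aclD_meet_xfms[OF assms])
qed

lemma aclD_meet_xfms_UNIV:
  assumes "\<Delta>1 \<subseteq> all_xfms" and "\<Delta>2 \<subseteq> all_xfms"
  shows "aclD M (meet_xfms \<Delta>1 \<Delta>2 UNIV) A = aclD M \<Delta>1 A \<inter> aclD M \<Delta>2 A"
  unfolding aclD_meet_xfms[OF assms]
proof (intro set_eqI iffI)
  fix x assume "x \<in> aclD M \<Delta>1 A \<inter> aclD M \<Delta>2 A"
  then obtain k1 k2 where "x \<in> aclDn M \<Delta>1 k1 A" "x \<in> aclDn M \<Delta>2 k2 A"
    by (auto simp: aclD_eq_UN_aclDn)
  then have "x \<in> aclDn M \<Delta>1 (max k1 k2) A \<inter> aclDn M \<Delta>2 (max k1 k2) A"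
    using aclDn_mono_bound[of k1 "max k1 k2" M \<Delta>1 A] aclDn_mono_bound[of k2 "max k1 k2" M \<Delta>2 A]
    by auto
  then show "x \<in> (\<Union>k\<in>UNIV. aclDn M \<Delta>1 k A \<inter> aclDn M \<Delta>2 k A)" by blast
qed (auto simp: aclD_eq_UN_aclDn)

section \<open>The semilattices of closure operators\<close>

lemma regular_op_Int:
  assumes "regular_op M c1" and "regular_op M c2" and "mono c1" and "mono c2"
  shows "regular_op M (\<lambda>A. c1 A \<inter> c2 A)"
  unfolding regular_op_def
proof (intro allI impI conjI)
  fix A assume A: "A \<subseteq> univ M"
  then show "A \<subseteq> c1 A \<inter> c2 A"
    using assms(1,2) by (auto simp: regular_op_def)
  have "c1 (c1 A \<inter> c2 A) \<subseteq> c1 (c1 A)" and "c2 (c1 A \<inter> c2 A) \<subseteq> c2 (c2 A)"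
    using assms(3,4) by (auto dest: monoD)
  moreover have "c1 (c1 A) \<subseteq> c1 A" and "c2 (c2 A) \<subseteq> c2 A"
    using A assms(1,2) by (auto simp: regular_op_def)
  ultimately show "c1 (c1 A \<inter> c2 A) \<inter> c2 (c1 A \<inter> c2 A) \<subseteq> c1 A \<inter> c2 A"
    by blast
qed

lemma mono_aclD: "mono (aclD M \<Delta>)"
  by (rule monoI) (rule aclD_mono)

lemma mono_aclDn: "mono (aclDn M \<Delta> k)"
  by (rule monoI) (rule aclDn_mono)

lemma SL_acl_Int:
  assumes "c1 \<in> SL_acl M" and "c2 \<in> SL_acl M"
  shows "(\<lambda>A. c1 A \<inter> c2 A) \<in> SL_acl M"
proof -
  obtain \<Delta>1 \<Delta>2 where \<Delta>: "\<Delta>1 \<subseteq> all_xfms" "\<Delta>2 \<subseteq> all_xfms"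
    and c: "c1 = aclD M \<Delta>1" "c2 = aclD M \<Delta>2"
    using assms by (auto simp: SL_acl_def)
  have "regular_op M (\<lambda>A. c1 A \<inter> c2 A)"
    using assms by (intro regular_op_Int) (auto simp: SL_acl_def c mono_aclD)
  moreover have "(\<lambda>A. c1 A \<inter> c2 A) = aclD M (meet_xfms \<Delta>1 \<Delta>2 UNIV)"
    by (simp add: fun_eq_iff c aclD_meet_xfms_UNIV[OF \<Delta>])
  ultimately show ?thesis
    using meet_xfms_subset_all_xfms[OF \<Delta>] by (auto simp: SL_acl_def)
qed

lemma SL_acl_n_Int:
  assumes "c1 \<in> SL_acl_n M k" and "c2 \<in> SL_acl_n M k"
  shows "(\<lambda>A. c1 A \<inter> c2 A) \<in> SL_acl_n M k"
proof -
  obtain \<Delta>1 \<Delta>2 where \<Delta>: "\<Delta>1 \<subseteq> all_xfms" "\<Delta>2 \<subseteq> all_xfms"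
    and c: "c1 = aclDn M \<Delta>1 k" "c2 = aclDn M \<Delta>2 k"
    using assms by (auto simp: SL_acl_n_def)
  have "regular_op M (\<lambda>A. c1 A \<inter> c2 A)"
    using assms by (intro regular_op_Int) (auto simp: SL_acl_n_def c mono_aclDn)
  moreover have "(\<lambda>A. c1 A \<inter> c2 A) = aclDn M (meet_xfms \<Delta>1 \<Delta>2 {k}) k"
    by (simp add: fun_eq_iff c aclDn_meet_xfms[OF \<Delta>])
  ultimately show ?thesis
    using meet_xfms_subset_all_xfms[OF \<Delta>] by (auto simp: SL_acl_n_def)
qed

lemma meet_semilattice_by_interI:
  assumes "\<And>c1 c2. c1 \<in> S \<Longrightarrow> c2 \<in> S \<Longrightarrow> (\<lambda>A. c1 A \<inter> c2 A) \<in> S"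
  shows "meet_semilattice_by_inter M S"
  using assms by (auto simp: meet_semilattice_by_inter_def op_le_def)

lemma has_least_if_Int_univ_mem:
  assumes "(\<lambda>A. A \<inter> univ M) \<in> S" and "\<And>c. c \<in> S \<Longrightarrow> regular_op M c"
  shows "has_least M S"
proof -
  have "op_le M (\<lambda>A. A \<inter> univ M) c" if "c \<in> S" for c
    using assms(2)[OF that] by (auto simp: op_le_def regular_op_def)
  then show ?thesis
    using assms(1) unfolding has_least_def by blast
qed

lemma regular_op_Int_univ: "regular_op M (\<lambda>A. A \<inter> univ M)"
  by (simp add: regular_op_def)

lemma has_least_SL_acl: "has_least M (SL_acl M)"
proof (rule has_least_if_Int_univ_mem)
  have "(\<lambda>A. A \<inter> univ M) = aclD M {eq_xfm}"
    by (simp add: fun_eq_iff aclD_eq_xfm)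
  then show "(\<lambda>A. A \<inter> univ M) \<in> SL_acl M"
    unfolding SL_acl_def using eq_xfm_in_all_xfms regular_op_Int_univ by blast
qed (auto simp: SL_acl_def)

lemma has_least_SL_acl_n: "0 < k \<Longrightarrow> has_least M (SL_acl_n M k)"
proof (rule has_least_if_Int_univ_mem)
  assume "0 < k"
  then have "(\<lambda>A. A \<inter> univ M) = aclDn M {eq_xfm} k"
    by (simp add: fun_eq_iff aclDn_eq_xfm)
  then show "(\<lambda>A. A \<inter> univ M) \<in> SL_acl_n M k"
    unfolding SL_acl_n_def using eq_xfm_in_all_xfms regular_op_Int_univ by blast
qed (auto simp: SL_acl_n_def)

lemma has_greatest_SL_acl: "has_greatest M (SL_acl M)"
  unfolding has_greatest_def
proof
  show "acl M \<in> SL_acl M"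
    using regular_op_acl by (auto simp: SL_acl_def)
  show "\<forall>c\<in>SL_acl M. op_le M c (acl M)"
  proof
    fix c assume "c \<in> SL_acl M"
    then obtain \<Delta> where "\<Delta> \<subseteq> all_xfms" "c = aclD M \<Delta>"
      by (auto simp: SL_acl_def)
    then show "op_le M c (acl M)"
      using aclD_mono_formulas[of \<Delta> all_xfms M] by (simp add: op_le_def)
  qed
qed

lemma has_greatest_SL_acl_n: "regular_op M (acl_n M k) \<Longrightarrow> has_greatest M (SL_acl_n M k)"
  unfolding has_greatest_def
proof
  assume "regular_op M (acl_n M k)"
  then show "acl_n M k \<in> SL_acl_n M k"
    by (auto simp: SL_acl_n_def acl_n_def)
  show "\<forall>c\<in>SL_acl_n M k. op_le M c (acl_n M k)"
  proof
    fix c assume "c \<in> SL_acl_n M k"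
    then obtain \<Delta> where "\<Delta> \<subseteq> all_xfms" "c = aclDn M \<Delta> k"
      by (auto simp: SL_acl_n_def)
    then show "op_le M c (acl_n M k)"
      using aclDn_mono_formulas[of \<Delta> all_xfms M k] by (simp add: op_le_def acl_n_def)
  qed
qed

theorem mainTheorem7:
  fixes T :: "('f,'p) fm set" and M :: "('a,'f,'p) struc"
  assumes "complete_theory T TYPE('a)"
    and "is_model M T"
    and "saturated_model M T"
  shows "(meet_semilattice_by_inter M (SL_acl M) \<and> has_least M (SL_acl M)
           \<and> has_greatest M (SL_acl M))
         \<and> (\<forall>n::nat. n \<noteq> 0 \<longrightarrow>
             meet_semilattice_by_inter M (SL_acl_n M n) \<and> has_least M (SL_acl_n M n)
             \<and> (regular_op M (acl_n M n) \<longrightarrow> has_greatest M (SL_acl_n M n)))"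
proof -
  have "meet_semilattice_by_inter M (SL_acl M)"
    by (rule meet_semilattice_by_interI) (rule SL_acl_Int)
  moreover have "meet_semilattice_by_inter M (SL_acl_n M n)" for n
    by (rule meet_semilattice_by_interI) (rule SL_acl_n_Int)
  ultimately show ?thesis
    using has_least_SL_acl has_greatest_SL_acl has_least_SL_acl_n has_greatest_SL_acl_n by blast
qed

end
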